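(* Let $N\ge 2$ be an integer. Let $G$ be a finite, simple, connected, bipartite graph with at least one edge and adjacency matrix $A$. Suppose that for every edge $\{p,q\}$ of $G$ and every integer $j\ge1$, $(A^{2j+1})_{pq}=\frac{(N-1)^{2j+1}+1}{N}$. Then: (a) the spectral radius of $A$ equals $N-1$; (b) $G$ is regular, with every vertex of degree $N-1$. *)

theory Defs
  imports "Jordan_Normal_Form.Spectral_Radius"
begin

definition simple_graph :: "nat \<Rightarrow> (nat \<Rightarrow> nat \<Rightarrow> bool) \<Rightarrow> bool" where
  "simple_graph n E \<longleftrightarrow> (\<forall>i j. E i j \<longrightarrow> i < n \<and> j < n)
                        \<and> (\<forall>i j. E i j \<longrightarrow> E j i) \<and> (\<forall>i. \<not> E i i)"

definition connected_graph :: "nat \<Rightarrow> (nat \<Rightarrow> nat \<Rightarrow> bool) \<Rightarrow> bool" where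
  "connected_graph n E \<longleftrightarrow> (\<forall>i j. i < n \<longrightarrow> j < n \<longrightarrow> E\<^sup>*\<^sup>* i j)"

definition bipartite_graph :: "nat \<Rightarrow> (nat \<Rightarrow> nat \<Rightarrow> bool) \<Rightarrow> bool" where
  "bipartite_graph n E \<longleftrightarrow> (\<exists>S. S \<subseteq> {0..<n} \<and>
      (\<forall>i j. E i j \<longrightarrow> (i \<in> S \<longleftrightarrow> j \<notin> S)))"

definition adj_mat :: "nat \<Rightarrow> (nat \<Rightarrow> nat \<Rightarrow> bool) \<Rightarrow> int mat" where
  "adj_mat n E = mat n n (\<lambda>(i, j). if E i j then 1 else 0)"

definition degree :: "nat \<Rightarrow> (nat \<Rightarrow> nat \<Rightarrow> bool) \<Rightarrow> nat \<Rightarrow> nat" where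
  "degree n E v = card {u. u < n \<and> E v u}"

end

theory Submission
  imports Defs
begin

text \<open>
  Put $x = N - 1$ and let $W_k(p,q)$ count the walks of length $k$ from $p$ to $q$. Bipartiteness
  makes $W_k(p,q)$ vanish when $k$ has the wrong parity, so on an edge the hypothesis determines
  $W_k(p,q) = 1 - x + \dots + x^{k-1}$ for every odd $k$, and splitting off the first step gives
  $W_k(p,p) = \deg p \cdot W_{k-1}(\text{edge})$ for even $k > 0$. Hence for a real polynomial $c$ the
  Gram entries $\langle c(A) e_p, c(A) e_q\rangle = (c(A)^2)_{pq}$ are explicit expressions in $x$
  and the degrees. Nonnegativity of $\|c(A) e_p\|^2$ for $c = (t^2 - 1)(t^2 - x^2)$ gives
  $\deg p \le x$, and that of $\|c(A)(e_p - e_q)\|^2$ along an edge for $c = t(t + x)(t^2 - 1)$ gives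
  $\deg p + \deg q \ge 2x$ when $x \ne 1$ (for $x = 1$ an edge alone forces degree $1$). Every vertex
  has a neighbour, so $G$ is $x$-regular: the all-ones vector is an eigenvector for $x$, and no
  eigenvalue exceeds the maximal row sum $x$.
\<close>

fun walks :: "nat \<Rightarrow> (nat \<Rightarrow> nat \<Rightarrow> bool) \<Rightarrow> nat \<Rightarrow> nat \<Rightarrow> nat \<Rightarrow> real" where
  "walks n E 0 p q = of_bool (p = q)"
| "walks n E (Suc k) p q = (\<Sum>r<n. walks n E k p r * of_bool (E r q))"

lemma index_pow_mat_Suc:
  fixes A :: "'a::comm_semiring_1 mat"
  assumes "A \<in> carrier_mat n n" and "p < n" and "q < n"
  shows "(A ^\<^sub>m Suc k) $$ (p, q) = (\<Sum>r<n. (A ^\<^sub>m k) $$ (p, r) * A $$ (r, q))"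
  using assms by (simp add: scalar_prod_def lessThan_atLeast0)

lemma of_int_index_adj_mat_pow:
  assumes "p < n" and "q < n"
  shows "real_of_int ((adj_mat n E ^\<^sub>m k) $$ (p, q)) = walks n E k p q"
  using assms(2)
proof (induction k arbitrary: q)
  case 0
  with assms(1) show ?case by (simp add: adj_mat_def)
next
  case (Suc k)
  have "adj_mat n E \<in> carrier_mat n n" by (simp add: adj_mat_def)
  from index_pow_mat_Suc[OF this assms(1) Suc.prems]
  have "(adj_mat n E ^\<^sub>m Suc k) $$ (p, q)
      = (\<Sum>r<n. (adj_mat n E ^\<^sub>m k) $$ (p, r) * of_bool (E r q))"
    using Suc.prems by (simp add: adj_mat_def of_bool_def)
  then show ?case
    using Suc by (simp del: sum_mult_of_bool_eq)
qed

lemma walks_one: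
  assumes "p < n"
  shows "walks n E 1 p q = of_bool (E p q)"
proof -
  from assms have "{..<n} \<inter> {r. p = r} = {p}" by auto
  then show ?thesis by simp
qed

lemma walks_add:
  "q < n \<Longrightarrow> walks n E (i + j) p q = (\<Sum>r<n. walks n E i p r * walks n E j r q)"
proof (induction j arbitrary: q)
  case 0
  then have "{..<n} \<inter> {r. r = q} = {q}" by auto
  then show ?case by simp
next
  case (Suc j)
  have "walks n E (i + Suc j) p q = (\<Sum>s<n. (\<Sum>r<n. walks n E i p r * walks n E j r s) * of_bool (E s q))"
    using Suc.IH by simp
  also have "\<dots> = (\<Sum>r<n. walks n E i p r * (\<Sum>s<n. walks n E j r s * of_bool (E s q)))"
    unfolding sum_distrib_left sum_distrib_right mult.assoc by (rule sum.swap)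
  finally show ?case by simp
qed

lemma walks_sym:
  assumes "symp E" and "p < n" and "q < n"
  shows "walks n E k p q = walks n E k q p"
  using assms(2,3)
proof (induction k arbitrary: p q)
  case 0
  then show ?case by simp
next
  case (Suc k)
  have "walks n E (k + 1) p q = (\<Sum>r<n. walks n E k p r * walks n E 1 r q)"
    by (rule walks_add[OF Suc.prems(2)])
  also have "\<dots> = (\<Sum>r<n. walks n E 1 q r * walks n E k r p)"
  proof (rule sum.cong)
    fix r assume r: "r \<in> {..<n}"
    have "E r q \<longleftrightarrow> E q r"
      using assms(1) by (auto dest: sympD)
    then have "walks n E 1 r q = walks n E 1 q r"
      using r Suc.prems by (simp only: walks_one lessThan_iff)
    moreover have "walks n E k p r = walks n E k r p"
      using r Suc by simp
    ultimately show "walks n E k p r * walks n E 1 r q = walks n E 1 q r * walks n E k r p"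
      by (simp only: mult.commute)
  qed simp
  also have "\<dots> = walks n E (1 + k) q p"
    by (rule walks_add[OF Suc.prems(1), symmetric])
  finally show ?case
    by (simp only: Suc_eq_plus1 add.commute)
qed

lemma walks_nonzero_parity:
  assumes bip: "\<And>i j. E i j \<Longrightarrow> i \<in> S \<longleftrightarrow> j \<notin> S"
    and "walks n E k p q \<noteq> 0"
  shows "(p \<in> S \<longleftrightarrow> q \<in> S) \<longleftrightarrow> even k"
  using assms(2)
proof (induction k arbitrary: q)
  case 0
  then show ?case by (simp split: if_splits)
next
  case (Suc k)
  then have "(\<Sum>r<n. walks n E k p r * of_bool (E r q)) \<noteq> 0"
    by (simp del: sum_mult_of_bool_eq)
  then obtain r where "walks n E k p r * of_bool (E r q) \<noteq> 0"
    using sum.not_neutral_contains_not_neutral by blast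
  then have "walks n E k p r \<noteq> 0" and "E r q"
    by auto
  with Suc.IH[of r] bip[of r q] show ?case by auto
qed

lemma of_nat_degree: "of_nat (degree n E p) = (\<Sum>q<n. of_bool (E p q))"
proof -
  have "{u. u < n \<and> E p u} = {..<n} \<inter> {q. E p q}"
    by auto
  then show ?thesis
    by (simp add: degree_def)
qed

text \<open>The entry $c(A)_{pq}$ for the polynomial $c = \sum_i cs_i\, t^i$.\<close>
definition walk_comb :: "nat \<Rightarrow> (nat \<Rightarrow> nat \<Rightarrow> bool) \<Rightarrow> real list \<Rightarrow> nat \<Rightarrow> nat \<Rightarrow> real" where
  "walk_comb n E cs p q = (\<Sum>i<length cs. cs ! i * walks n E i p q)"

lemma walk_comb_sym:
  assumes "symp E" and "p < n" and "q < n"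
  shows "walk_comb n E cs p q = walk_comb n E cs q p"
  unfolding walk_comb_def using walks_sym[OF assms(1)] assms(2,3) by simp

lemma walk_comb_inner:
  assumes "symp E" and "p < n" and "q < n"
  shows "(\<Sum>r<n. walk_comb n E cs p r * walk_comb n E cs q r)
       = (\<Sum>i<length cs. \<Sum>j<length cs. cs ! i * cs ! j * walks n E (i + j) p q)"
proof -
  have "(\<Sum>r<n. walk_comb n E cs p r * walk_comb n E cs q r)
      = (\<Sum>r<n. walk_comb n E cs p r * walk_comb n E cs r q)"
    using walk_comb_sym[OF assms(1,3)] by (intro sum.cong) auto
  also have "\<dots> = (\<Sum>r<n. \<Sum>i<length cs. \<Sum>j<length cs.
                      cs ! i * cs ! j * (walks n E i p r * walks n E j r q))"
    unfolding walk_comb_def sum_product by (simp add: mult_ac)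
  also have "\<dots> = (\<Sum>i<length cs. \<Sum>j<length cs. \<Sum>r<n.
                      cs ! i * cs ! j * (walks n E i p r * walks n E j r q))"
    by (subst sum.swap) (simp only: sum.swap[of _ "{..<n}"])
  also have "\<dots> = (\<Sum>i<length cs. \<Sum>j<length cs. cs ! i * cs ! j *
                      (\<Sum>r<n. walks n E i p r * walks n E j r q))"
    by (simp only: sum_distrib_left)
  also have "\<dots> = (\<Sum>i<length cs. \<Sum>j<length cs. cs ! i * cs ! j * walks n E (i + j) p q)"
    by (simp only: walks_add[OF assms(3)])
  finally show ?thesis .
qed

locale uniform_odd_walks =
  fixes n :: nat and E :: "nat \<Rightarrow> nat \<Rightarrow> bool" and x :: real
  assumes simple: "simple_graph n E"
    and bipartite: "bipartite_graph n E"
    and pos: "x > 0"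
    and odd_walks_edge: "\<And>p q j. E p q \<Longrightarrow> j \<ge> 1 \<Longrightarrow>
           walks n E (2 * j + 1) p q = (x ^ (2 * j + 1) + 1) / (x + 1)"
begin

lemma sym: "symp E"
  using simple by (auto simp: simple_graph_def intro: sympI)

lemma edge_in_range: "E p q \<Longrightarrow> p < n \<and> q < n"
  using simple by (simp add: simple_graph_def)

lemma bipartition:
  obtains S where "\<And>i j. E i j \<Longrightarrow> i \<in> S \<longleftrightarrow> j \<notin> S"
  using bipartite by (auto simp: bipartite_graph_def)

lemma walks_edge:
  assumes "E p q"
  shows "walks n E k p q = (if even k then 0 else \<Sum>i<k. (-x) ^ i)"
proof (cases "even k")
  case True
  obtain S where "\<And>i j. E i j \<Longrightarrow> i \<in> S \<longleftrightarrow> j \<notin> S"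
    using bipartition by blast
  with assms True walks_nonzero_parity[of E S] show ?thesis
    by fastforce
next
  case False
  then obtain j where k: "k = 2 * j + 1"
    using oddE by blast
  have "x ^ k + 1 = (x + 1) * (\<Sum>i<k. (-x) ^ i)"
    using power_diff_1_eq[of "-x" k] False by (simp add: algebra_simps)
  then have "(x ^ k + 1) / (x + 1) = (\<Sum>i<k. (-x) ^ i)"
    using pos by (simp add: field_simps)
  moreover have "walks n E k p q = (x ^ k + 1) / (x + 1)"
  proof (cases "j = 0")
    case True
    with k assms edge_in_range[OF assms] pos show ?thesis
      by (simp add: walks_one)
  next
    case False
    then show ?thesis
      using k odd_walks_edge[OF assms, of j] by simp
  qed
  ultimately show ?thesis
    using False by simp
qed

lemma walks_diag:
  assumes "p < n"
  shows "walks n E k p p =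
    (if odd k then 0 else if k = 0 then 1 else degree n E p * (\<Sum>i<k - 1. (-x) ^ i))"
proof -
  consider "odd k" | "k = 0" | "even k" "k \<noteq> 0"
    by blast
  then show ?thesis
  proof cases
    case 1
    obtain S where "\<And>i j. E i j \<Longrightarrow> i \<in> S \<longleftrightarrow> j \<notin> S"
      using bipartition by blast
    with 1 walks_nonzero_parity[of E S] show ?thesis
      by fastforce
  next
    case 2
    then show ?thesis by simp
  next
    case 3
    then have "odd (k - 1)" and k: "k = 1 + (k - 1)"
      by simp_all
    have "walks n E k p p = (\<Sum>r<n. walks n E 1 p r * walks n E (k - 1) r p)"
      by (subst k) (rule walks_add[OF assms])
    also have "\<dots> = (\<Sum>r<n. of_bool (E p r) * (\<Sum>i<k - 1. (-x) ^ i))"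
      using assms \<open>odd (k - 1)\<close> by (intro sum.cong) (auto simp: walks_one walks_edge sympD[OF sym])
    also have "\<dots> = degree n E p * (\<Sum>i<k - 1. (-x) ^ i)"
      by (simp add: of_nat_degree sum_distrib_right del: sum_of_bool_eq)
    finally show ?thesis
      using 3 by simp
  qed
qed

lemma degree_le:
  assumes "p < n"
  shows "real (degree n E p) \<le> x"
proof -
  let ?c = "[x\<^sup>2, 0, -(x\<^sup>2 + 1), 0, 1]" \<comment> \<open>coefficients of $(t^2 - 1)(t^2 - x^2)$\<close>
  have "0 \<le> (\<Sum>r<n. walk_comb n E ?c p r * walk_comb n E ?c p r)"
    by (simp add: sum_nonneg)
  also have "\<dots> = x ^ 3 * (x - degree n E p)"
    unfolding walk_comb_inner[OF sym assms assms]
    by (simp add: walks_diag[OF assms] algebra_simps power2_eq_square power3_eq_cube)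
  finally show ?thesis
    using pos by (simp add: zero_le_mult_iff)
qed

lemma degree_sum_ge_if_edge:
  assumes "E p q" and "x \<noteq> 1"
  shows "2 * x \<le> real (degree n E p) + real (degree n E q)"
proof -
  let ?c = "[0, -x, -1, x, 1]" \<comment> \<open>coefficients of $t (t + x) (t^2 - 1)$\<close>
  let ?P = "walk_comb n E ?c"
  have p: "p < n" and q: "q < n"
    using edge_in_range[OF assms(1)] by auto
  have "0 \<le> (\<Sum>r<n. (?P p r - ?P q r)\<^sup>2)"
    by (simp add: sum_nonneg)
  also have "\<dots> = (\<Sum>r<n. ?P p r * ?P p r) + (\<Sum>r<n. ?P q r * ?P q r) - 2 * (\<Sum>r<n. ?P p r * ?P q r)"
    by (simp add: power2_eq_square algebra_simps sum.distrib sum_subtractf sum_distrib_left)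
  also have "\<dots> = 2 * x ^ 3 * (x - 1)\<^sup>2 * (x + 1) * (degree n E p + degree n E q - 2 * x)"
    unfolding walk_comb_inner[OF sym p p] walk_comb_inner[OF sym q q] walk_comb_inner[OF sym p q]
    by (simp add: walks_diag[OF p] walks_diag[OF q] walks_edge[OF assms(1)]
        algebra_simps power2_eq_square power3_eq_cube)
  finally have "0 \<le> 2 * x ^ 3 * (x - 1)\<^sup>2 * (x + 1) * (degree n E p + degree n E q - 2 * x)" .
  moreover have "0 < 2 * x ^ 3 * (x - 1)\<^sup>2 * (x + 1)"
    using pos assms(2) by simp
  ultimately show ?thesis
    by (simp add: zero_le_mult_iff)
qed

lemma degree_eq_if_edge:
  assumes "E p q"
  shows "real (degree n E p) = x"
proof (cases "x = 1")
  case True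
  have "q \<in> {u. u < n \<and> E p u}"
    using assms edge_in_range by blast
  then have "degree n E p \<noteq> 0"
    unfolding degree_def by (metis card_0_eq empty_iff finite_Collect_conjI finite_Collect_less_nat)
  then show ?thesis
    using True degree_le[of p] edge_in_range[OF assms] by linarith
next
  case False
  have "real (degree n E p) \<le> x" "real (degree n E q) \<le> x"
    using degree_le edge_in_range[OF assms] by auto
  then show ?thesis
    using degree_sum_ge_if_edge[OF assms False] by linarith
qed

end

lemma eigenvalue_norm_le_row_sum:
  fixes A :: "complex mat"
  assumes A: "A \<in> carrier_mat n n" and "eigenvalue A \<mu>"
  obtains p where "p < n" and "norm \<mu> \<le> (\<Sum>q<n. norm (A $$ (p, q)))"
proof -
  obtain v where v: "v \<in> carrier_vec n" "v \<noteq> 0\<^sub>v n" "A *\<^sub>v v = \<mu> \<cdot>\<^sub>v v"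
    using assms unfolding eigenvalue_def eigenvector_def by auto
  then have "n > 0"
    by (auto intro!: eq_vecI)
  then obtain p where "p \<in> {..<n}" and p_Max: "Max ((\<lambda>q. norm (v $ q)) ` {..<n}) = norm (v $ p)"
    by (metis obtains_MAX finite_lessThan lessThan_empty_iff not_less0)
  then have "p < n" and p_max: "\<And>q. q < n \<Longrightarrow> norm (v $ q) \<le> norm (v $ p)"
    by (auto simp flip: p_Max)
  have "v $ p \<noteq> 0"
    using v p_max by (auto intro!: eq_vecI)
  have "\<mu> * v $ p = (A *\<^sub>v v) $ p"
    using v \<open>p < n\<close> by simp
  also have "\<dots> = (\<Sum>q<n. A $$ (p, q) * v $ q)"
    using A v(1) \<open>p < n\<close> by (simp add: scalar_prod_def lessThan_atLeast0)
  finally have "norm \<mu> * norm (v $ p) = norm (\<Sum>q<n. A $$ (p, q) * v $ q)"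
    by (metis norm_mult)
  also have "\<dots> \<le> (\<Sum>q<n. norm (A $$ (p, q)) * norm (v $ p))"
    by (rule order_trans[OF norm_sum sum_mono]) (simp add: norm_mult mult_left_mono p_max)
  finally show ?thesis
    using that[OF \<open>p < n\<close>] \<open>v $ p \<noteq> 0\<close> by (simp add: sum_distrib_right[symmetric])
qed

lemma adj_mat_row_sum:
  assumes "p < n"
  shows "(\<Sum>q<n. (map_mat of_int (adj_mat n E) :: complex mat) $$ (p, q)) = of_nat (degree n E p)"
  using assms by (auto simp: of_nat_degree adj_mat_def intro!: sum.cong simp del: sum_of_bool_eq)

lemma adj_mat_row_norm_sum:
  assumes "p < n"
  shows "(\<Sum>q<n. norm ((map_mat of_int (adj_mat n E) :: complex mat) $$ (p, q))) = degree n E p"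
  using assms by (auto simp: of_nat_degree adj_mat_def intro!: sum.cong simp del: sum_of_bool_eq)

lemma eigenvalue_adj_mat_regular:
  assumes "n > 0" and "\<And>v. v < n \<Longrightarrow> degree n E v = d"
  shows "eigenvalue (map_mat of_int (adj_mat n E) :: complex mat) (of_nat d)"
  unfolding eigenvalue_def eigenvector_def
proof (intro exI conjI)
  let ?A = "map_mat of_int (adj_mat n E) :: complex mat"
  show "?A *\<^sub>v vec n (\<lambda>_. 1) = of_nat d \<cdot>\<^sub>v vec n (\<lambda>_. 1)"
  proof (rule eq_vecI)
    fix p assume "p < dim_vec (of_nat d \<cdot>\<^sub>v vec n (\<lambda>_. 1) :: complex vec)"
    then have "p < n" by simp
    then show "(?A *\<^sub>v vec n (\<lambda>_. 1)) $ p = (of_nat d \<cdot>\<^sub>v vec n (\<lambda>_. 1)) $ p"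
      using adj_mat_row_sum[of p n E] assms(2)
      by (simp add: adj_mat_def scalar_prod_def lessThan_atLeast0)
  qed (simp add: adj_mat_def)
  show "vec n (\<lambda>_. 1 :: complex) \<noteq> 0\<^sub>v (dim_row ?A)"
    using assms(1) by (auto simp: adj_mat_def dest: arg_cong[where f = "\<lambda>w. w $ 0"])
qed (simp add: adj_mat_def)

lemma spectral_radius_adj_mat_regular:
  assumes "n > 0" and "\<And>v. v < n \<Longrightarrow> degree n E v = d"
  shows "spectral_radius (map_mat of_int (adj_mat n E)) = d"
proof (rule antisym)
  let ?A = "map_mat of_int (adj_mat n E) :: complex mat"
  have A: "?A \<in> carrier_mat n n"
    by (simp add: adj_mat_def)
  obtain \<mu> where "eigenvalue ?A \<mu>" and "spectral_radius ?A = norm \<mu>"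
    using spectral_radius_mem_max(1)[OF A assms(1)] by (auto simp: spectrum_def)
  then show "spectral_radius ?A \<le> d"
    using eigenvalue_norm_le_row_sum[OF A] adj_mat_row_norm_sum assms(2) by metis
  have "of_nat d \<in> spectrum ?A"
    using eigenvalue_adj_mat_regular[OF assms] by (simp add: spectrum_def)
  then show "real d \<le> spectral_radius ?A"
    using spectral_radius_mem_max(2)[OF A assms(1)] by force
qed

lemma connected_graph_neighbor:
  assumes "connected_graph n E" and "E p q" and "p < n" and "v < n"
  obtains u where "E v u"
proof (cases "v = p")
  case True
  with assms(2) that show ?thesis by blast
next
  case False
  from assms(1,3,4) have "E\<^sup>*\<^sup>* v p"
    by (simp add: connected_graph_def)
  with False that show ?thesis
    by (metis converse_rtranclpE)
qed

theorem proposition2: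
  fixes N n :: nat and E :: "nat \<Rightarrow> nat \<Rightarrow> bool"
  assumes "N \<ge> 2"
    and "simple_graph n E" and "connected_graph n E" and "bipartite_graph n E"
    and "\<exists>p q. E p q"
    and "\<And>p q j. E p q \<Longrightarrow> j \<ge> 1 \<Longrightarrow>
           real_of_int ((adj_mat n E ^\<^sub>m (2 * j + 1)) $$ (p, q))
             = ((real N - 1) ^ (2 * j + 1) + 1) / real N"
  shows "spectral_radius (map_mat of_int (adj_mat n E)) = real N - 1
         \<and> (\<forall>v < n. degree n E v = N - 1)"
proof -
  interpret uniform_odd_walks n E "real N - 1"
  proof
    fix p q and j :: nat
    assume "E p q" and "j \<ge> 1"
    moreover from \<open>E p q\<close> assms(2) have "p < n" and "q < n"
      by (auto simp: simple_graph_def)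
    ultimately show "walks n E (2 * j + 1) p q = ((real N - 1) ^ (2 * j + 1) + 1) / (real N - 1 + 1)"
      using assms(6) by (simp del: walks.simps flip: of_int_index_adj_mat_pow)
  qed (use assms in auto)
  obtain p q where pq: "E p q"
    using assms(5) by blast
  then have "p < n"
    using edge_in_range by blast
  have regular: "degree n E v = N - 1" if v: "v < n" for v
  proof -
    obtain u where "E v u"
      using connected_graph_neighbor[OF assms(3) pq \<open>p < n\<close> v] .
    then have "real (degree n E v) = real (N - 1)"
      using degree_eq_if_edge assms(1) by (simp add: of_nat_diff)
    then show ?thesis
      using of_nat_eq_iff by blast
  qed
  have "spectral_radius (map_mat of_int (adj_mat n E)) = real (N - 1)"
    using spectral_radius_adj_mat_regular \<open>p < n\<close> regular by (metis gr0I not_less0)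
  with regular assms(1) show ?thesis
    by simp
qed

end
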